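(* Let $V$ be a vertex algebra and $W_1,W_2$ $V$-modules with $g(V)_{\ge0}W_1=W_1$. Then every $g(V)_{\ge0}$-homomorphism $f:W_1\to W_2$ (a linear map with $f(v_nw)=v_nf(w)$ for all $v\in V$, $n\ge0$, $w\in W_1$) is a $V$-homomorphism, i.e. $f(v_nw)=v_nf(w)$ for all $n\in\mathbb Z$.
   Context: $(V,Y,\mathbf 1)$ is a vertex algebra; $V$-modules are modules for the vertex algebra (no grading assumed), with $Y_W(v,x)=\sum_nv_nx^{-n-1}$. $g(V)_{\ge0}W_1=\mathrm{span}\{v_nw\mid v\in V,\ n\ge0,\ w\in W_1\}$. *)

theory Defs
  imports Complex_Main "HOL-Library.Groups_Big_Fun"
begin

text \<open>Vertex operators are encoded by their modes: Y u n w stands for u_n w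
  (coefficient of x^(-n-1) in Y(u,x)w).\<close>

definition int_sign :: "int \<Rightarrow> 'k::field" where
  "int_sign r = (if even r then 1 else -1)"

text \<open>All sums are finite by truncation; Sum_any sums over the finite support.\<close>

definition borcherds ::
  "('k::field_char_0 \<Rightarrow> 'w::ab_group_add \<Rightarrow> 'w) \<Rightarrow> ('v \<Rightarrow> int \<Rightarrow> 'v \<Rightarrow> 'v)
   \<Rightarrow> ('v \<Rightarrow> int \<Rightarrow> 'w \<Rightarrow> 'w) \<Rightarrow> bool" where
  "borcherds sW Y YW \<longleftrightarrow>
     (\<forall>u v w p q r.
        (\<Sum>i. sW (of_int p gchoose i) (YW (Y u (r + int i) v) (p + q - int i) w))
      = (\<Sum>i. sW ((-1) ^ i * (of_int r gchoose i))
               (YW u (p + r - int i) (YW v (q + int i) w)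
                - sW (int_sign r) (YW v (q + r - int i) (YW u (p + int i) w)))))"

definition va_module ::
  "('k::field_char_0 \<Rightarrow> 'v::ab_group_add \<Rightarrow> 'v) \<Rightarrow> ('v \<Rightarrow> int \<Rightarrow> 'v \<Rightarrow> 'v) \<Rightarrow> 'v
   \<Rightarrow> ('k \<Rightarrow> 'w::ab_group_add \<Rightarrow> 'w) \<Rightarrow> ('v \<Rightarrow> int \<Rightarrow> 'w \<Rightarrow> 'w) \<Rightarrow> bool" where
  "va_module sV Y one sW YW \<longleftrightarrow>
     vector_space sW \<and>
     (\<forall>n w. Vector_Spaces.linear sV sW (\<lambda>u. YW u n w)) \<and>
     (\<forall>u n. Vector_Spaces.linear sW sW (YW u n)) \<and>
     (\<forall>u w. \<exists>N. \<forall>n\<ge>N. YW u n w = 0) \<and>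
     (\<forall>n w. YW one n w = (if n = -1 then w else 0)) \<and>
     borcherds sW Y YW"

definition vertex_algebra ::
  "('k::field_char_0 \<Rightarrow> 'v::ab_group_add \<Rightarrow> 'v) \<Rightarrow> ('v \<Rightarrow> int \<Rightarrow> 'v \<Rightarrow> 'v) \<Rightarrow> 'v \<Rightarrow> bool" where
  "vertex_algebra sV Y one \<longleftrightarrow>
     vector_space sV \<and>
     (\<forall>n w. Vector_Spaces.linear sV sV (\<lambda>u. Y u n w)) \<and>
     (\<forall>u n. Vector_Spaces.linear sV sV (Y u n)) \<and>
     (\<forall>u w. \<exists>N. \<forall>n\<ge>N. Y u n w = 0) \<and>
     (\<forall>n w. Y one n w = (if n = -1 then w else 0)) \<and>
     (\<forall>u n. n \<ge> 0 \<longrightarrow> Y u n one = 0) \<and>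
     (\<forall>u. Y u (-1) one = u) \<and>
     borcherds sV Y Y"

definition gV_nonneg_span ::
  "('k::field \<Rightarrow> 'w::ab_group_add \<Rightarrow> 'w) \<Rightarrow> ('v \<Rightarrow> int \<Rightarrow> 'w \<Rightarrow> 'w) \<Rightarrow> 'w set" where
  "gV_nonneg_span sW YW = module.span sW {YW v n w | v n w. n \<ge> 0}"

end

theory Submission
  imports Defs
begin

text \<open>For fixed v and n both f \<circ> v_n and v_n \<circ> f are linear, so it suffices to compare them
  on the spanning vectors u_m x with m \<ge> 0. This is done by downward induction on m, starting from
  the m with u_m x = 0. Choose p \<ge> 0 so large that v_(p+i) annihilates both x and f x. The
  Borcherds identity then degenerates to the associativity formula
  sum_i C(p,i) (v_(n-p+i) u)_(p+m-i) x = sum_i (-1)^i C(n-p,i) v_(n-i) u_(m+i) x.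
  On the left only the nonnegative modes p+m-i (i \<le> p) occur, so f commutes with it; on the
  right the terms with i \<ge> 1 are covered by the induction hypothesis, leaving v_n u_m x.\<close>

lemma Sum_any_eq_sum_atMost:
  fixes g :: "nat \<Rightarrow> 'a::comm_monoid_add"
  assumes "\<And>i. i > M \<Longrightarrow> g i = 0"
  shows "Sum_any g = sum g {..M}"
  by (rule Sum_any.expand_superset) (use assms not_le in auto)

locale borcherds_module = vector_space s
  for s :: "'k::field_char_0 \<Rightarrow> 'w::ab_group_add \<Rightarrow> 'w" +
  fixes Y :: "'v \<Rightarrow> int \<Rightarrow> 'v \<Rightarrow> 'v" and YW :: "'v \<Rightarrow> int \<Rightarrow> 'w \<Rightarrow> 'w"
  assumes mode_linear: "Vector_Spaces.linear s s (YW u n)"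
    and mode_truncation: "\<exists>N. \<forall>n\<ge>N. YW u n w = 0"
    and borcherds_identity: "borcherds s Y YW"
begin

lemma mode_zero [simp]: "YW u n 0 = 0"
  using mode_linear linear_iff_module_hom module_hom.zero by metis

lemma associativity_formula:
  assumes "\<And>i. YW a (p + int i) w = 0"
  shows "Sum_any (\<lambda>i. s (of_int p gchoose i) (YW (Y a (r + int i) b) (p + q - int i) w))
       = Sum_any (\<lambda>i. s ((-1) ^ i * (of_int r gchoose i)) (YW a (p + r - int i) (YW b (q + int i) w)))"
  using borcherds_identity assms unfolding borcherds_def by simp

lemma associativity_formula_finite:
  fixes p :: nat
  assumes "\<And>i. YW a (int p + int i) w = 0" and "\<And>i. i > M \<Longrightarrow> YW b (q + int i) w = 0"
  shows "(\<Sum>i\<le>p. s (of_nat p gchoose i) (YW (Y a (r + int i) b) (int p + q - int i) w))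
       = (\<Sum>i\<le>M. s ((-1) ^ i * (of_int r gchoose i)) (YW a (int p + r - int i) (YW b (q + int i) w)))"
proof -
  have binomial_vanish: "(of_nat p gchoose i :: 'k) = 0" if "i > p" for i
    using that by (simp flip: binomial_gbinomial)
  have "(\<Sum>i\<le>p. s (of_nat p gchoose i) (YW (Y a (r + int i) b) (int p + q - int i) w))
      = Sum_any (\<lambda>i. s (of_nat p gchoose i) (YW (Y a (r + int i) b) (int p + q - int i) w))"
    by (rule Sum_any_eq_sum_atMost[symmetric]) (simp add: binomial_vanish)
  also have "\<dots> = Sum_any (\<lambda>i. s ((-1) ^ i * (of_int r gchoose i))
                         (YW a (int p + r - int i) (YW b (q + int i) w)))"
    using associativity_formula[of a "int p" w r b q] assms(1) by simp
  also have "\<dots> = (\<Sum>i\<le>M. s ((-1) ^ i * (of_int r gchoose i)) (YW a (int p + r - int i) (YW b (q + int i) w)))"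
    by (rule Sum_any_eq_sum_atMost) (simp add: assms(2))
  finally show ?thesis .
qed

end

locale nonneg_mode_hom =
  M1: borcherds_module s1 Y Y1 + M2: borcherds_module s2 Y Y2
  for s1 :: "'k::field_char_0 \<Rightarrow> 'w1::ab_group_add \<Rightarrow> 'w1"
    and s2 :: "'k \<Rightarrow> 'w2::ab_group_add \<Rightarrow> 'w2"
    and Y :: "'v \<Rightarrow> int \<Rightarrow> 'v \<Rightarrow> 'v" and Y1 and Y2 +
  fixes f :: "'w1 \<Rightarrow> 'w2"
  assumes linear_f: "Vector_Spaces.linear s1 s2 f"
    and commutes_nonneg_mode: "n \<ge> 0 \<Longrightarrow> f (Y1 v n w) = Y2 v n (f w)"
begin

sublocale F: module_hom s1 s2 f
  using linear_f by (simp add: linear_iff_module_hom)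

lemma commutes_mode_at_mode_step:
  assumes "m \<ge> 0"
    and above: "\<And>m' v' n'. m' > m \<Longrightarrow> f (Y1 v' n' (Y1 u m' x)) = Y2 v' n' (f (Y1 u m' x))"
  shows "f (Y1 v n (Y1 u m x)) = Y2 v n (f (Y1 u m x))"
proof -
  obtain N1 where N1: "\<forall>k\<ge>N1. Y1 v k x = 0" using M1.mode_truncation by blast
  obtain N2 where N2: "\<forall>k\<ge>N2. Y2 v k (f x) = 0" using M2.mode_truncation by blast
  obtain N where N: "\<forall>k\<ge>N. Y1 u k x = 0" using M1.mode_truncation by blast
  define p where "p = nat (max N1 N2)"
  define M where "M = nat (N - m)"
  define r where "r = n - int p"
  define c where "c i = ((-1) ^ i * (of_int r gchoose i) :: 'k)" for i
  have f_u: "f (Y1 u (m + int i) x) = Y2 u (m + int i) (f x)" for i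
    using commutes_nonneg_mode \<open>m \<ge> 0\<close> by simp
  have u_vanish: "Y1 u (m + int i) x = 0" if "i > M" for i
    using that N by (simp add: M_def)
  have assoc1: "(\<Sum>i\<le>p. s1 (of_nat p gchoose i) (Y1 (Y v (r + int i) u) (int p + m - int i) x))
      = (\<Sum>i\<le>M. s1 (c i) (Y1 v (int p + r - int i) (Y1 u (m + int i) x)))"
    unfolding c_def using N1 u_vanish by (intro M1.associativity_formula_finite) (simp_all add: p_def)
  have assoc2: "(\<Sum>i\<le>p. s2 (of_nat p gchoose i) (Y2 (Y v (r + int i) u) (int p + m - int i) (f x)))
      = (\<Sum>i\<le>M. s2 (c i) (Y2 v (int p + r - int i) (Y2 u (m + int i) (f x))))"
    unfolding c_def using N2 u_vanish
    by (intro M2.associativity_formula_finite) (simp_all add: p_def flip: f_u)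
  have "f (\<Sum>i\<le>p. s1 (of_nat p gchoose i) (Y1 (Y v (r + int i) u) (int p + m - int i) x))
      = (\<Sum>i\<le>p. s2 (of_nat p gchoose i) (Y2 (Y v (r + int i) u) (int p + m - int i) (f x)))"
    unfolding F.sum using \<open>m \<ge> 0\<close> by (intro sum.cong) (simp_all add: F.scale commutes_nonneg_mode)
  then have "f (\<Sum>i\<le>M. s1 (c i) (Y1 v (int p + r - int i) (Y1 u (m + int i) x)))
      = (\<Sum>i\<le>M. s2 (c i) (Y2 v (int p + r - int i) (Y2 u (m + int i) (f x))))"
    unfolding assoc1 assoc2 .
  moreover have "f (s1 (c (Suc i)) (Y1 v (int p + r - int (Suc i)) (Y1 u (m + int (Suc i)) x)))
      = s2 (c (Suc i)) (Y2 v (int p + r - int (Suc i)) (Y2 u (m + int (Suc i)) (f x)))" for i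
    using above f_u[of "Suc i"] by (simp add: F.scale)
  ultimately have "f (s1 (c 0) (Y1 v (int p + r) (Y1 u m x))) = s2 (c 0) (Y2 v (int p + r) (Y2 u m (f x)))"
    unfolding sum.atMost_shift F.add F.sum by simp
  then show ?thesis
    using f_u[of 0] by (simp add: c_def r_def)
qed

lemma commutes_mode_at_nonneg_mode:
  assumes "m \<ge> 0"
  shows "f (Y1 v n (Y1 u m x)) = Y2 v n (f (Y1 u m x))"
proof -
  obtain N where N: "\<forall>k\<ge>N. Y1 u k x = 0" using M1.mode_truncation by blast
  have "\<forall>m v n. m \<ge> N - int d \<longrightarrow> m \<ge> 0 \<longrightarrow> f (Y1 v n (Y1 u m x)) = Y2 v n (f (Y1 u m x))"
    for d
  proof (induction d)
    case 0
    then show ?case using N by simp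
  next
    case (Suc d)
    show ?case
    proof (intro allI impI)
      fix m v n
      assume m: "N - int (Suc d) \<le> m" "0 \<le> m"
      show "f (Y1 v n (Y1 u m x)) = Y2 v n (f (Y1 u m x))"
        by (rule commutes_mode_at_mode_step[OF m(2)]) (use m Suc.IH in auto)
    qed
  qed
  from this[of "nat (N - m)"] show ?thesis using assms by simp
qed

lemma commutes_all_modes:
  assumes "M1.span {Y1 v n w | v n w. n \<ge> 0} = UNIV"
  shows "f (Y1 v n w) = Y2 v n (f w)"
proof (rule vector_space_pair.linear_eq_on_span[where f = "\<lambda>w. f (Y1 v n w)" and g = "\<lambda>w. Y2 v n (f w)"])
  show "vector_space_pair s1 s2" by unfold_locales
  show "Vector_Spaces.linear s1 s2 (\<lambda>w. f (Y1 v n w))"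
    using Vector_Spaces.linear_compose[OF M1.mode_linear linear_f] by (simp add: o_def)
  show "Vector_Spaces.linear s1 s2 (\<lambda>w. Y2 v n (f w))"
    using Vector_Spaces.linear_compose[OF linear_f M2.mode_linear] by (simp add: o_def)
  show "w \<in> M1.span {Y1 v n w | v n w. n \<ge> 0}" using assms by simp
qed (auto intro: commutes_mode_at_nonneg_mode)

end

theorem mainTheorem12:
  fixes sV :: "'k::field_char_0 \<Rightarrow> 'v::ab_group_add \<Rightarrow> 'v"
    and Y :: "'v \<Rightarrow> int \<Rightarrow> 'v \<Rightarrow> 'v" and one :: 'v
    and s1 :: "'k \<Rightarrow> 'w1::ab_group_add \<Rightarrow> 'w1" and Y1 :: "'v \<Rightarrow> int \<Rightarrow> 'w1 \<Rightarrow> 'w1"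
    and s2 :: "'k \<Rightarrow> 'w2::ab_group_add \<Rightarrow> 'w2" and Y2 :: "'v \<Rightarrow> int \<Rightarrow> 'w2 \<Rightarrow> 'w2"
    and f :: "'w1 \<Rightarrow> 'w2"
  assumes "vertex_algebra sV Y one"
    and "va_module sV Y one s1 Y1"
    and "va_module sV Y one s2 Y2"
    and "gV_nonneg_span s1 Y1 = UNIV"
    and "Vector_Spaces.linear s1 s2 f"
    and "\<forall>v n w. n \<ge> 0 \<longrightarrow> f (Y1 v n w) = Y2 v n (f w)"
  shows "\<forall>v n w. f (Y1 v n w) = Y2 v n (f w)"
proof -
  have module: "borcherds_module s Y YW" if "va_module sV Y one s YW"
    for s :: "'k \<Rightarrow> 'w::ab_group_add \<Rightarrow> 'w" and YW
    using that unfolding va_module_def borcherds_module_def borcherds_module_axioms_def by blast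
  interpret nonneg_mode_hom s1 s2 Y Y1 Y2 f
    using module[OF assms(2)] module[OF assms(3)] assms(5,6)
    by (simp add: nonneg_mode_hom_def nonneg_mode_hom_axioms_def)
  show ?thesis
    using commutes_all_modes assms(4) unfolding gV_nonneg_span_def by blast
qed

end
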